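(* Let $e_1,\dots,e_k\in\mathbb{C}^{n\times n}$ be an anticommuting family, $n\ge 1$. Then \[\sum_{i=1}^k \mathrm{rk}(e_i^n)\le (2\log_2 n+1)\,n.\]
   Context: A family $e_1,\dots,e_k$ of complex $n\times n$ matrices is called anticommuting if $e_ie_j=-e_je_i$ for all distinct $i,j\in\{1,\dots,k\}$. $\mathrm{rk}$ denotes matrix rank. *)

theory Defs
  imports "HOL-Analysis.Analysis"
begin

fun matrix_pow :: "'a::semiring_1^'n^'n \<Rightarrow> nat \<Rightarrow> 'a^'n^'n" where
  "matrix_pow A 0 = mat 1"
| "matrix_pow A (Suc m) = A ** matrix_pow A m"

end

theory Submission
  imports Defs "HOL-Computational_Algebra.Fundamental_Theorem_Algebra"
begin

text \<open>
  Since \<open>rk M = dim (M\<^sup>T \<complex>\<^sup>n)\<close> and transposes of an anticommuting family anticommute,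
  it suffices to bound \<open>\<Sum>\<^sub>i dim (e\<^sub>i\<^sup>n W)\<close> by \<open>(2 log\<^sub>2 d + 1) d\<close>, \<open>d = dim W\<close>, for every
  subspace \<open>W\<close> invariant under all \<open>e\<^sub>i\<close>; this goes by induction on \<open>d\<close>.
  If some \<open>e\<^sub>j\<close> is singular on \<open>W\<close> without \<open>e\<^sub>j\<^sup>n\<close> vanishing there, the Fitting decomposition
  \<open>W = ker e\<^sub>j\<^sup>n \<oplus> im e\<^sub>j\<^sup>n\<close> splits \<open>W\<close> into two proper nonzero subspaces, invariant under every
  \<open>e\<^sub>i\<close> because \<open>e\<^sub>j\<^sup>n\<close> commutes with \<open>e\<^sub>i\<close> up to sign; the bound is superadditive.
  Otherwise every \<open>e\<^sub>i\<close> is invertible or nilpotent on \<open>W\<close>, and the sum is \<open>s d\<close> with \<open>s\<close> the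
  number of invertible ones. For two of them, \<open>a\<close> and \<open>b\<close>, the product \<open>a b\<close> has an eigenvalue
  \<open>c \<noteq> 0\<close>; \<open>a\<close> maps its \<open>c\<close>-eigenspace injectively into the \<open>-c\<close>-eigenspace, while the
  remaining ones commute with \<open>a b\<close>. Passing to that eigenspace halves the dimension and
  removes two matrices, so \<open>2\<^sup>\<lfloor>s/2\<rfloor> \<le> d\<close>, i.e. \<open>s \<le> 2 log\<^sub>2 d + 1\<close>.
\<close>

section \<open>Matrix powers and rank\<close>

lemma matrix_pow_Suc_right: "matrix_pow A (Suc m) = matrix_pow A m ** A"
  by (induction m) (simp_all add: matrix_mul_assoc)

lemma matrix_pow_add: "matrix_pow A (m + k) = matrix_pow A m ** matrix_pow A k"
  by (induction m) (simp_all add: matrix_mul_assoc)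

lemma matrix_pow_commute: "A ** matrix_pow A m = matrix_pow A m ** A"
  using matrix_pow_Suc_right[of A m] by simp

lemma transpose_matrix_pow:
  "transpose (matrix_pow (A :: 'a::comm_semiring_1^'n^'n) m) = matrix_pow (transpose A) m"
  by (induction m) (simp_all add: transpose_mat matrix_transpose_mul matrix_pow_commute)

lemma matrix_mul_minus_left: "(- A) ** B = - (A ** (B :: 'a::ring_1^'p^'n))"
  by (simp add: matrix_matrix_mult_def vec_eq_iff sum_negf)

lemma matrix_mul_minus_right: "A ** (- B) = - (A ** (B :: 'a::ring_1^'p^'n))"
  by (simp add: matrix_matrix_mult_def vec_eq_iff sum_negf)

lemma matrix_vector_mult_minus_left: "(- A) *v x = - (A *v (x :: 'a::ring_1^'n))"
  by (simp add: matrix_vector_mult_def vec_eq_iff sum_negf)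

lemma matrix_vector_mult_minus_right: "A *v (- x) = - (A *v (x :: 'a::ring_1^'n))"
  by (simp add: matrix_vector_mult_def vec_eq_iff sum_negf)

lemma transpose_minus: "transpose (- A) = - transpose A"
  by (simp add: transpose_def vec_eq_iff)

lemma matrix_pow_anticommute:
  fixes A B :: "'a::ring_1^'n^'n"
  assumes "A ** B = - (B ** A)"
  shows "matrix_pow B m ** A = A ** matrix_pow B m \<or> matrix_pow B m ** A = - (A ** matrix_pow B m)"
proof (induction m)
  case 0
  then show ?case by simp
next
  case (Suc m)
  have BA: "B ** A = - (A ** B)"
    using assms by simp
  have unfold: "matrix_pow B (Suc m) ** A = B ** (matrix_pow B m ** A)"
    by (simp add: matrix_mul_assoc)
  from Suc show ?case
  proof
    assume IH: "matrix_pow B m ** A = A ** matrix_pow B m"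
    have "matrix_pow B (Suc m) ** A = - (A ** matrix_pow B (Suc m))"
      unfolding unfold IH by (simp add: matrix_mul_assoc BA matrix_mul_minus_left)
    then show ?thesis ..
  next
    assume IH: "matrix_pow B m ** A = - (A ** matrix_pow B m)"
    have "matrix_pow B (Suc m) ** A = A ** matrix_pow B (Suc m)"
      unfolding unfold IH
      by (simp add: matrix_mul_assoc BA matrix_mul_minus_left matrix_mul_minus_right)
    then show ?thesis ..
  qed
qed

lemma matrix_pow_mult_in_invariant:
  assumes "\<forall>y\<in>W. A *v y \<in> W" and "x \<in> W"
  shows "matrix_pow A m *v x \<in> W"
  using assms by (induction m) (simp_all flip: matrix_vector_mul_assoc)

lemma matrix_pow_injective_on:
  fixes A :: "'a::ring_1^'n^'n"
  assumes inv: "\<forall>y\<in>W. A *v y \<in> W" and inj: "\<forall>y\<in>W. A *v y = 0 \<longrightarrow> y = 0"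
  shows "y \<in> W \<Longrightarrow> matrix_pow A m *v y = 0 \<Longrightarrow> y = 0"
proof (induction m arbitrary: y)
  case (Suc m)
  then have "matrix_pow A m *v (A *v y) = 0"
    by (metis matrix_pow_Suc_right matrix_vector_mul_assoc)
  then show ?case
    using Suc inv inj by blast
qed simp

lemma span_columns_eq_range:
  fixes B :: "'a::field^'n^'m"
  shows "vec.span (columns B) = range (\<lambda>x. B *v x)"
proof
  have "columns B = range (\<lambda>j. B *v axis j 1)"
    by (auto simp: columns_def column_def matrix_vector_mult_def axis_def if_distrib sum.delta'
        cong: if_cong)
  then show "vec.span (columns B) \<subseteq> range (\<lambda>x. B *v x)"
    by (intro vec.span_minimal) (auto intro: vec.subspace_image[OF vec.subspace_UNIV])
  show "range (\<lambda>x. B *v x) \<subseteq> vec.span (columns B)"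
    using matrix_vector_mult_in_columnspace_gen by blast
qed

lemma rank_eq_dim_range_transpose:
  fixes A :: "'a::field^'n^'m"
  shows "rank A = vec.dim (range (\<lambda>x. transpose A *v x))"
  by (metis row_rank_def_gen columns_transpose span_columns_eq_range vec.dim_span)

section \<open>Invariant subspaces\<close>

lemma subspace_eigenspace_within:
  fixes A :: "'a::field^'n^'n"
  assumes W: "vec.subspace W"
  shows "vec.subspace {y\<in>W. A *v y = c *s y}"
proof (rule vec.subspaceI)
  show "0 \<in> {y\<in>W. A *v y = c *s y}"
    using vec.subspace_0[OF W] by simp
next
  fix u v assume "u \<in> {y\<in>W. A *v y = c *s y}" "v \<in> {y\<in>W. A *v y = c *s y}"
  then show "u + v \<in> {y\<in>W. A *v y = c *s y}"
    by (simp add: vec.subspace_add[OF W] matrix_vector_right_distrib vector_add_ldistrib)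
next
  fix r u assume "u \<in> {y\<in>W. A *v y = c *s y}"
  then show "r *s u \<in> {y\<in>W. A *v y = c *s y}"
    by (simp add: vec.subspace_scale[OF W] vector_scalar_commute vector_smult_assoc mult.commute)
qed

lemma subspace_kernel_within:
  fixes A :: "'a::field^'n^'n"
  shows "vec.subspace W \<Longrightarrow> vec.subspace {y\<in>W. A *v y = 0}"
  using subspace_eigenspace_within[of W A 0] by simp

lemma eigenspaces_disjoint:
  fixes A :: "'a::field^'n^'n"
  assumes "c \<noteq> d"
  shows "{y. A *v y = c *s y} \<inter> {y. A *v y = d *s y} = {0}"
proof -
  have "y = 0" if "c *s y = d *s y" for y :: "'a^'n"
  proof -
    have "(c - d) *s y = 0"
      using that by (simp add: vec_eq_iff algebra_simps)
    then show ?thesis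
      using assms by simp
  qed
  then show ?thesis
    by auto
qed

lemma one_le_dim_if_nonzero:
  fixes W :: "('a::field^'n) set"
  assumes "vec.subspace W" "W \<noteq> {0}"
  shows "1 \<le> vec.dim W"
proof -
  have "\<not> W \<subseteq> {0}"
    using assms vec.subspace_0 by blast
  then show ?thesis
    using vec.dim_eq_0[of W] by linarith
qed

lemma dim_image_inj_on:
  fixes A :: "'a::field^'n^'n"
  assumes W: "vec.subspace W" and inj: "\<forall>y\<in>W. A *v y = 0 \<longrightarrow> y = 0"
  shows "vec.dim ((\<lambda>y. A *v y) ` W) = vec.dim W"
proof (rule vec.dim_image_eq[OF matrix_vector_mul_linear_gen])
  show "inj_on ((*v) A) (vec.span W)"
    unfolding vec.span_eq_iff[THEN iffD2, OF W]
  proof (rule inj_onI)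
    fix u v assume "u \<in> W" "v \<in> W" "A *v u = A *v v"
    then have "A *v (u - v) = 0" "u - v \<in> W"
      using W by (simp_all add: matrix_vector_mult_diff_distrib vec.subspace_diff)
    then show "u = v"
      using inj by auto
  qed
qed

lemma dim_direct_sum:
  fixes U V :: "('a::field^'n) set"
  assumes "vec.subspace U" "vec.subspace V" "U \<inter> V \<subseteq> {0}"
  shows "vec.dim {u + v |u v. u \<in> U \<and> v \<in> V} = vec.dim U + vec.dim V"
proof -
  have "U \<inter> V = {0}"
    using assms vec.subspace_0 by blast
  then show ?thesis
    using vec.dim_sums_Int[OF assms(1,2)] by simp
qed

lemma eigenspace_invariant_if_commute:
  fixes A B :: "'a::field^'n^'n"
  assumes AB: "A ** B = B ** A" and inv: "\<forall>y\<in>W. B *v y \<in> W"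
    and y: "y \<in> {y\<in>W. A *v y = c *s y}"
  shows "B *v y \<in> {y\<in>W. A *v y = c *s y}"
proof -
  have "A *v (B *v y) = B *v (A *v y)"
    by (simp add: matrix_vector_mul_assoc AB)
  then show ?thesis
    using y inv by (simp add: vector_scalar_commute)
qed

lemma eigenspace_swap_if_anticommute:
  fixes A B :: "'a::field^'n^'n"
  assumes AB: "A ** B = - (B ** A)" and inv: "\<forall>y\<in>W. B *v y \<in> W"
    and y: "y \<in> {y\<in>W. A *v y = c *s y}"
  shows "B *v y \<in> {y\<in>W. A *v y = (- c) *s y}"
proof -
  have "A *v (B *v y) = - (B *v (A *v y))"
    by (simp add: matrix_vector_mul_assoc AB matrix_vector_mult_minus_left)
  then show ?thesis
    using y inv by (simp add: vector_scalar_commute)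
qed

lemma kernel_image_invariant_if_commute_up_to_sign:
  fixes A B :: "'a::field^'n^'n"
  assumes AB: "A ** B = B ** A \<or> A ** B = - (B ** A)"
    and W: "vec.subspace W" and inv: "\<forall>y\<in>W. B *v y \<in> W"
  shows "\<forall>y\<in>{x\<in>W. A *v x = 0}. B *v y \<in> {x\<in>W. A *v x = 0}"
    and "\<forall>y\<in>(\<lambda>x. A *v x) ` W. B *v y \<in> (\<lambda>x. A *v x) ` W"
proof -
  have "A *v (B *v x) = B *v (A *v x) \<or> A *v (B *v x) = B *v (- (A *v x))" for x
    using AB by (auto simp: matrix_vector_mul_assoc matrix_vector_mult_minus_left
        matrix_vector_mult_minus_right)
  then show "\<forall>y\<in>{x\<in>W. A *v x = 0}. B *v y \<in> {x\<in>W. A *v x = 0}"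
    using inv by (metis (mono_tags, lifting) mem_Collect_eq matrix_vector_mult_0_right neg_equal_0_iff_equal)
  have "B *v (A *v x) = A *v (B *v x) \<or> B *v (A *v x) = A *v (- (B *v x))" for x
    using AB by (auto simp: matrix_vector_mul_assoc matrix_vector_mult_minus_left
        matrix_vector_mult_minus_right)
  then show "\<forall>y\<in>(\<lambda>x. A *v x) ` W. B *v y \<in> (\<lambda>x. A *v x) ` W"
    using inv vec.subspace_neg[OF W] by blast
qed

section \<open>Eigenvectors in invariant subspaces\<close>

text \<open>\<open>poly_matrix_vector p A x\<close> is \<open>p(A) x\<close>, evaluated by Horner's scheme.\<close>

definition poly_matrix_vector :: "'a::field poly \<Rightarrow> 'a^'n^'n \<Rightarrow> 'a^'n \<Rightarrow> 'a^'n" where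
  "poly_matrix_vector p A x = fold_coeffs (\<lambda>a y. a *s x + A *v y) p 0"

lemma poly_matrix_vector_0 [simp]: "poly_matrix_vector 0 A x = 0"
  by (simp add: poly_matrix_vector_def)

lemma poly_matrix_vector_pCons:
  "poly_matrix_vector (pCons a p) A x = a *s x + A *v poly_matrix_vector p A x"
  by (cases "p = 0"; cases "a = 0") (simp_all add: poly_matrix_vector_def)

lemma poly_matrix_vector_add:
  "poly_matrix_vector (p + q) A x = poly_matrix_vector p A x + poly_matrix_vector q A x"
proof (induction p arbitrary: q)
  case (pCons a p)
  obtain b q' where "q = pCons b q'"
    by (cases q) auto
  then show ?case
    using pCons.IH[of q'] by (simp add: poly_matrix_vector_pCons matrix_vector_right_distrib
        vector_sadd_rdistrib algebra_simps)
qed simp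

lemma poly_matrix_vector_smult:
  "poly_matrix_vector (smult c p) A x = c *s poly_matrix_vector p A x"
  by (induction p) (simp_all add: poly_matrix_vector_pCons vector_scalar_commute
      vector_add_ldistrib vector_smult_assoc)

lemma poly_matrix_vector_diff:
  "poly_matrix_vector (p - q) A x = poly_matrix_vector p A x - poly_matrix_vector q A x"
  using poly_matrix_vector_add[of p "- q" A x] poly_matrix_vector_smult[of "- 1" q A x] by simp

lemma poly_matrix_vector_monom:
  "poly_matrix_vector (monom 1 j) A x = matrix_pow A j *v x"
  by (induction j) (simp_all add: poly_matrix_vector_pCons monom_0 monom_Suc
      matrix_vector_mul_assoc)

lemma poly_matrix_vector_linear_factor:
  "poly_matrix_vector ([:- r, 1:] * q) A x
     = A *v poly_matrix_vector q A x - r *s poly_matrix_vector q A x"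
proof -
  have "[:- r, 1:] * q = pCons 0 q - smult r q"
    by simp
  then show ?thesis
    by (simp only: poly_matrix_vector_diff poly_matrix_vector_smult poly_matrix_vector_pCons) simp
qed

lemma poly_matrix_vector_in_invariant:
  assumes W: "vec.subspace W" and inv: "\<forall>y\<in>W. A *v y \<in> W" and x: "x \<in> W"
  shows "poly_matrix_vector p A x \<in> W"
  by (induction p) (simp_all add: poly_matrix_vector_pCons vec.subspace_0[OF W]
      vec.subspace_add[OF W] vec.subspace_scale[OF W] x inv)

lemma span_krylov_subset:
  fixes A :: "'a::field^'n^'n"
  assumes "0 < j"
  shows "vec.span ((\<lambda>i. matrix_pow A i *v x) ` {..<j})
           \<subseteq> {poly_matrix_vector q A x |q. degree q < j}"
proof (rule vec.span_minimal)
  show "(\<lambda>i. matrix_pow A i *v x) ` {..<j} \<subseteq> {poly_matrix_vector q A x |q. degree q < j}"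
    by (force simp: poly_matrix_vector_monom[symmetric] degree_monom_eq)
  show "vec.subspace {poly_matrix_vector q A x |q. degree q < j}"
  proof (rule vec.subspaceI)
    show "0 \<in> {poly_matrix_vector q A x |q. degree q < j}"
      using assms by (force intro: exI[of _ 0])
  next
    fix u v assume "u \<in> {poly_matrix_vector q A x |q. degree q < j}"
      "v \<in> {poly_matrix_vector q A x |q. degree q < j}"
    then show "u + v \<in> {poly_matrix_vector q A x |q. degree q < j}"
      by (force simp: poly_matrix_vector_add[symmetric] intro: degree_add_less)
  next
    fix c u assume "u \<in> {poly_matrix_vector q A x |q. degree q < j}"
    then show "c *s u \<in> {poly_matrix_vector q A x |q. degree q < j}"
      by (force simp: poly_matrix_vector_smult[symmetric])
  qed
qed

lemma annihilating_poly_exists: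
  fixes A :: "'a::field^'n^'n"
  obtains p where "p \<noteq> 0" and "poly_matrix_vector p A x = 0"
proof (cases "x = 0")
  case True
  then show ?thesis
    using that[of 1] by (simp add: one_pCons poly_matrix_vector_pCons)
next
  case False
  define K where "K j = (\<lambda>i. matrix_pow A i *v x) ` {..<j}" for j
  have "\<exists>j. matrix_pow A j *v x \<in> vec.span (K j)"
  proof (rule ccontr)
    assume "\<nexists>j. matrix_pow A j *v x \<in> vec.span (K j)"
    then have "vec.dim (K j) = j" for j
      by (induction j) (simp_all add: K_def lessThan_Suc vec.dim_insert)
    then show False
      using dim_subset_UNIV_cart_gen[of "K (Suc CARD('n))"] by simp
  qed
  then obtain j where j: "matrix_pow A j *v x \<in> vec.span (K j)"
    by blast
  have "0 < j"
  proof (rule ccontr)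
    assume "\<not> 0 < j"
    then show False
      using j False by (simp add: K_def)
  qed
  then obtain q where q: "degree q < j" "matrix_pow A j *v x = poly_matrix_vector q A x"
    using span_krylov_subset j unfolding K_def by blast
  have "coeff (monom 1 j - q) j = 1"
    using q(1) by (simp add: coeff_eq_0)
  then have "monom 1 j - q \<noteq> 0"
    by auto
  moreover have "poly_matrix_vector (monom 1 j - q) A x = 0"
    using q(2) by (simp add: poly_matrix_vector_diff poly_matrix_vector_monom)
  ultimately show ?thesis
    using that by blast
qed

lemma eigenvector_from_annihilating_poly:
  fixes A :: "complex^'n^'n"
  assumes W: "vec.subspace W" and inv: "\<forall>y\<in>W. A *v y \<in> W" and x: "x \<in> W" "x \<noteq> 0"
  shows "p \<noteq> 0 \<Longrightarrow> poly_matrix_vector p A x = 0 \<Longrightarrow> \<exists>y c. y \<in> W \<and> y \<noteq> 0 \<and> A *v y = c *s y"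
proof (induction "degree p" arbitrary: p rule: less_induct)
  case less
  show ?case
  proof (cases "degree p = 0")
    case True
    then obtain a where "p = [:a:]" "a \<noteq> 0"
      using less.prems degree_0_id by (metis pCons_0_0)
    then show ?thesis
      using less.prems x by (simp add: poly_matrix_vector_pCons)
  next
    case False
    then have "\<not> constant (poly p)"
      by (simp add: constant_degree)
    then obtain z where "poly p z = 0"
      using fundamental_theorem_of_algebra by blast
    then have "[:- z, 1:] dvd p"
      by (simp add: dvd_iff_poly_eq_0)
    then obtain q where p: "p = [:- z, 1:] * q"
      by (elim dvdE)
    with less.prems have "q \<noteq> 0"
      by auto
    then have "degree q < degree p"
      using degree_mult_eq[of "[:- z, 1:]" q] p by simp
    show ?thesis
    proof (cases "poly_matrix_vector q A x = 0")
      case True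
      then show ?thesis
        using less.hyps \<open>q \<noteq> 0\<close> \<open>degree q < degree p\<close> by blast
    next
      case False
      have "A *v poly_matrix_vector q A x - z *s poly_matrix_vector q A x = 0"
        using less.prems(2) unfolding p poly_matrix_vector_linear_factor .
      then have "A *v poly_matrix_vector q A x = z *s poly_matrix_vector q A x"
        by simp
      then show ?thesis
        using False poly_matrix_vector_in_invariant[OF W inv x(1)] by blast
    qed
  qed
qed

lemma invariant_subspace_has_eigenvector:
  fixes A :: "complex^'n^'n"
  assumes W: "vec.subspace W" and inv: "\<forall>y\<in>W. A *v y \<in> W" and nonzero: "W \<noteq> {0}"
  obtains y c where "y \<in> W" "y \<noteq> 0" "A *v y = c *s y"
proof -
  obtain x where "x \<in> W" "x \<noteq> 0"
    using nonzero vec.subspace_0[OF W] by blast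
  moreover obtain p where "p \<noteq> 0" "poly_matrix_vector p A x = 0"
    using annihilating_poly_exists by blast
  ultimately show ?thesis
    using eigenvector_from_annihilating_poly[OF W inv] that by blast
qed

section \<open>Fitting decomposition\<close>

lemma mono_bounded_nat_stationary:
  fixes f :: "nat \<Rightarrow> nat"
  assumes mono: "\<And>i. f i \<le> f (Suc i)" and bounded: "\<And>i. f i \<le> d"
  shows "\<exists>i\<le>d. f (Suc i) = f i"
proof (rule ccontr)
  assume no_stop: "\<not> ?thesis"
  have "i \<le> f i" if "i \<le> Suc d" for i
    using that
  proof (induction i)
    case (Suc i)
    then have "i \<le> f i" "f i \<noteq> f (Suc i)"
      using no_stop by auto
    then show ?case
      using mono[of i] by linarith
  qed simp
  then show False
    using bounded[of "Suc d"] by fastforce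
qed

lemma stationary_after:
  assumes step: "\<And>j. S (Suc j) = S j \<Longrightarrow> S (Suc (Suc j)) = S (Suc j)"
    and i: "S (Suc i) = S i" and "i \<le> m"
  shows "S m = S i"
proof -
  have "S (Suc (i + d)) = S (i + d)" for d
    by (induction d) (simp_all add: i step)
  then have "S (i + d) = S i" for d
    by (induction d) simp_all
  then show ?thesis
    using \<open>i \<le> m\<close> by (metis le_add_diff_inverse)
qed

lemma kernel_matrix_pow_stationary:
  fixes B :: "'a::field^'n^'n"
  assumes W: "vec.subspace W" and inv: "\<forall>y\<in>W. B *v y \<in> W"
    and "vec.dim W \<le> N" "N \<le> m"
  shows "{x\<in>W. matrix_pow B m *v x = 0} = {x\<in>W. matrix_pow B N *v x = 0}"
proof -
  define K where "K i = {x\<in>W. matrix_pow B i *v x = 0}" for i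
  have mono: "K i \<subseteq> K (Suc i)" for i
    by (auto simp: K_def simp flip: matrix_vector_mul_assoc)
  have subspace: "vec.subspace (K i)" for i
    unfolding K_def by (rule subspace_kernel_within[OF W])
  have pow_Suc: "matrix_pow B (Suc i) *v x = matrix_pow B i *v (B *v x)" for i x
    by (simp only: matrix_pow_Suc_right matrix_vector_mul_assoc)
  have step: "K (Suc (Suc j)) = K (Suc j)" if "K (Suc j) = K j" for j
  proof
    show "K (Suc (Suc j)) \<subseteq> K (Suc j)"
    proof
      fix x assume "x \<in> K (Suc (Suc j))"
      then have "B *v x \<in> K (Suc j)"
        using inv by (simp add: K_def pow_Suc del: matrix_pow.simps)
      then have "B *v x \<in> K j"
        using that by simp
      then show "x \<in> K (Suc j)"
        using \<open>x \<in> K (Suc (Suc j))\<close> by (simp add: K_def pow_Suc del: matrix_pow.simps)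
    qed
  qed (rule mono)
  have sub: "K i \<subseteq> W" for i
    by (auto simp: K_def)
  have "\<exists>i\<le>vec.dim W. vec.dim (K (Suc i)) = vec.dim (K i)"
    by (intro mono_bounded_nat_stationary vec.dim_subset mono sub)
  then obtain i where i: "i \<le> vec.dim W" "vec.dim (K (Suc i)) = vec.dim (K i)"
    by blast
  have "K i = K (Suc i)"
    by (rule vec.subspace_dim_equal[OF subspace subspace mono]) (simp add: i(2))
  then have "K (Suc i) = K i" "i \<le> N" "i \<le> m"
    using i(1) assms(3,4) by simp_all
  then have "K m = K N"
    using stationary_after[of K i, OF step] by metis
  then show ?thesis
    by (simp only: K_def)
qed

lemma fitting_decomposition:
  fixes B :: "'a::field^'n^'n"
  assumes W: "vec.subspace W" and inv: "\<forall>y\<in>W. B *v y \<in> W" and N: "vec.dim W \<le> N"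
  defines "P \<equiv> matrix_pow B N"
  shows "W = {u + v |u v. u \<in> {x\<in>W. P *v x = 0} \<and> v \<in> (\<lambda>y. P *v y) ` W}"
    and "{x\<in>W. P *v x = 0} \<inter> (\<lambda>y. P *v y) ` W \<subseteq> {0}"
proof -
  let ?K = "{x\<in>W. P *v x = 0}" and ?I = "(\<lambda>y. P *v y) ` W"
  have P_in: "y \<in> W \<Longrightarrow> P *v y \<in> W" for y
    unfolding P_def by (rule matrix_pow_mult_in_invariant[OF inv])
  have PP: "P *v (P *v y) = matrix_pow B (N + N) *v y" for y
    by (simp add: P_def matrix_pow_add matrix_vector_mul_assoc)
  show disjoint: "?K \<inter> ?I \<subseteq> {0}"
  proof
    fix z assume "z \<in> ?K \<inter> ?I"
    then obtain y where y: "y \<in> W" "z = P *v y" "P *v (P *v y) = 0"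
      by auto
    then have "y \<in> {x\<in>W. matrix_pow B (N + N) *v x = 0}"
      by (simp add: PP)
    then have "y \<in> ?K"
      using kernel_matrix_pow_stationary[OF W inv N, of "N + N"] by (simp add: P_def)
    then show "z \<in> {0}"
      using y by simp
  qed
  have I_subspace: "vec.subspace ?I"
    by (rule vec.subspace_image[OF W])
  have "vec.dim ((\<lambda>y. P *v y) ` ?I) = vec.dim ?I"
    using dim_image_inj_on[OF I_subspace] disjoint P_in by blast
  then have PI: "(\<lambda>y. P *v y) ` ?I = ?I"
    using vec.subspace_dim_equal[OF vec.subspace_image[OF I_subspace] I_subspace] P_in
    by (metis (no_types, lifting) image_mono image_subsetI order_refl)
  show "W = {u + v |u v. u \<in> ?K \<and> v \<in> ?I}"
  proof
    show "W \<subseteq> {u + v |u v. u \<in> ?K \<and> v \<in> ?I}"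
    proof
      fix x assume x: "x \<in> W"
      then obtain y where y: "y \<in> W" "P *v x = P *v (P *v y)"
        using PI by (metis (no_types, lifting) image_iff)
      then have "x - P *v y \<in> ?K"
        using x P_in vec.subspace_diff[OF W] by (simp add: matrix_vector_mult_diff_distrib)
      moreover have "P *v y \<in> ?I"
        using y by simp
      ultimately show "x \<in> {u + v |u v. u \<in> ?K \<and> v \<in> ?I}"
        by force
    qed
    show "{u + v |u v. u \<in> ?K \<and> v \<in> ?I} \<subseteq> W"
      using P_in vec.subspace_add[OF W] by auto
  qed
qed

section \<open>Invertible anticommuting matrices\<close>

lemma commute_with_anticommuting_product:
  fixes A B C :: "'a::ring_1^'n^'n"
  assumes CA: "C ** A = - (A ** C)" and CB: "C ** B = - (B ** C)"
  shows "C ** (A ** B) = (A ** B) ** C"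
proof -
  have "C ** (A ** B) = - (A ** (C ** B))"
    by (simp only: matrix_mul_assoc CA matrix_mul_minus_left)
  also have "\<dots> = (A ** B) ** C"
    by (simp only: CB matrix_mul_minus_right minus_minus matrix_mul_assoc)
  finally show ?thesis .
qed

lemma anticommute_with_own_product:
  fixes A B :: "'a::ring_1^'n^'n"
  assumes BA: "B ** A = - (A ** B)"
  shows "(A ** B) ** A = - (A ** (A ** B))"
  by (simp only: matrix_mul_assoc[symmetric] BA matrix_mul_minus_right)

text \<open>\<open>A\<close> embeds the \<open>c\<close>-eigenspace of \<open>A B\<close> into its \<open>-c\<close>-eigenspace.\<close>

lemma anticommuting_pair_eigenspace:
  fixes A B :: "complex^'n^'n"
  assumes BA: "B ** A = - (A ** B)" and W: "vec.subspace W" and nonzero: "W \<noteq> {0}"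
    and inv_A: "\<forall>y\<in>W. A *v y \<in> W" and inv_B: "\<forall>y\<in>W. B *v y \<in> W"
    and inj_A: "\<forall>y\<in>W. A *v y = 0 \<longrightarrow> y = 0" and inj_B: "\<forall>y\<in>W. B *v y = 0 \<longrightarrow> y = 0"
  obtains c where "{y\<in>W. (A ** B) *v y = c *s y} \<noteq> {0}"
    and "2 * vec.dim {y\<in>W. (A ** B) *v y = c *s y} \<le> vec.dim W"
proof -
  define E where "E c = {y\<in>W. (A ** B) *v y = c *s y}" for c
  have AB_apply: "(A ** B) *v y = A *v (B *v y)" for y
    by (simp add: matrix_vector_mul_assoc)
  have inv_AB: "\<forall>y\<in>W. (A ** B) *v y \<in> W" and inj_AB: "\<forall>y\<in>W. (A ** B) *v y = 0 \<longrightarrow> y = 0"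
    using inv_A inv_B inj_A inj_B unfolding AB_apply by blast+
  obtain y c where y: "y \<in> W" "y \<noteq> 0" "(A ** B) *v y = c *s y"
    using invariant_subspace_has_eigenvector[OF W inv_AB nonzero] by blast
  have "c \<noteq> 0"
  proof
    assume "c = 0"
    then have "(A ** B) *v y = 0"
      using y(3) by simp
    then show False
      using inj_AB y(1,2) by blast
  qed
  have E_subspace: "vec.subspace (E d)" for d
    unfolding E_def by (rule subspace_eigenspace_within[OF W])
  have "vec.dim (E c) = vec.dim ((\<lambda>y. A *v y) ` E c)"
    using dim_image_inj_on[OF E_subspace] inj_A by (auto simp: E_def)
  also have "\<dots> \<le> vec.dim (E (- c))"
    using eigenspace_swap_if_anticommute[OF anticommute_with_own_product[OF BA] inv_A]
    by (intro vec.dim_subset) (auto simp: E_def)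
  finally have half: "vec.dim (E c) \<le> vec.dim (E (- c))" .
  have "E c \<inter> E (- c) \<subseteq> {0}"
    using eigenspaces_disjoint[of c "- c" "A ** B"] \<open>c \<noteq> 0\<close> by (auto simp: E_def)
  then have "vec.dim (E c) + vec.dim (E (- c)) = vec.dim {u + v |u v. u \<in> E c \<and> v \<in> E (- c)}"
    using dim_direct_sum[OF E_subspace E_subspace] by simp
  also have "\<dots> \<le> vec.dim W"
    by (intro vec.dim_subset) (auto simp: E_def intro: vec.subspace_add[OF W])
  finally have "2 * vec.dim (E c) \<le> vec.dim W"
    using half by simp
  moreover have "E c \<noteq> {0}"
    using y by (auto simp: E_def)
  ultimately show ?thesis
    using that unfolding E_def by blast
qed

lemma anticommuting_injective_family_dim:
  fixes e :: "'i \<Rightarrow> complex^'n^'n"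
  assumes anti: "\<forall>i\<in>I. \<forall>j\<in>I. i \<noteq> j \<longrightarrow> e i ** e j = - (e j ** e i)"
  shows "finite S \<Longrightarrow> S \<subseteq> I \<Longrightarrow> vec.subspace W \<Longrightarrow> W \<noteq> {0}
    \<Longrightarrow> \<forall>i\<in>S. \<forall>y\<in>W. e i *v y \<in> W \<Longrightarrow> \<forall>i\<in>S. \<forall>y\<in>W. e i *v y = 0 \<longrightarrow> y = 0
    \<Longrightarrow> 2 ^ (card S div 2) \<le> vec.dim W"
proof (induction "card S" arbitrary: S W rule: less_induct)
  case less
  note S = less.prems(1,2) and W = less.prems(3,4) and inv = less.prems(5) and inj = less.prems(6)
  have "1 \<le> vec.dim W"
    using one_le_dim_if_nonzero W by blast
  show ?case
  proof (cases "card S < 2")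
    case True
    then show ?thesis
      using \<open>1 \<le> vec.dim W\<close> by simp
  next
    case False
    then obtain a b where ab: "a \<in> S" "b \<in> S" "a \<noteq> b"
      using card_le_Suc0_iff_eq[OF S(1)] by fastforce
    have "e b ** e a = - (e a ** e b)"
      using S(2) ab by (intro anti[rule_format]) auto
    moreover have "\<forall>y\<in>W. e a *v y \<in> W" "\<forall>y\<in>W. e b *v y \<in> W"
      and "\<forall>y\<in>W. e a *v y = 0 \<longrightarrow> y = 0" "\<forall>y\<in>W. e b *v y = 0 \<longrightarrow> y = 0"
      using inv inj ab by blast+
    ultimately obtain c where E: "{y\<in>W. (e a ** e b) *v y = c *s y} \<noteq> {0}"
      "2 * vec.dim {y\<in>W. (e a ** e b) *v y = c *s y} \<le> vec.dim W"
      using anticommuting_pair_eigenspace[OF _ W] by blast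
    let ?E = "{y\<in>W. (e a ** e b) *v y = c *s y}"
    have inv_E: "\<forall>i\<in>S - {a, b}. \<forall>y\<in>?E. e i *v y \<in> ?E"
    proof (intro ballI)
      fix i y assume i: "i \<in> S - {a, b}" and y: "y \<in> ?E"
      have "e i ** (e a ** e b) = (e a ** e b) ** e i"
        using S(2) ab i by (intro commute_with_anticommuting_product anti[rule_format]) auto
      moreover have "\<forall>y\<in>W. e i *v y \<in> W"
        using inv i by simp
      ultimately show "e i *v y \<in> ?E"
        by (rule eigenspace_invariant_if_commute[OF sym _ y])
    qed
    have inj_E: "\<forall>i\<in>S - {a, b}. \<forall>y\<in>?E. e i *v y = 0 \<longrightarrow> y = 0"
      using inj by blast
    have "card (S - {a, b}) < card S"
      using ab S(1) by (intro psubset_card_mono) auto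
    moreover have "finite (S - {a, b})" "S - {a, b} \<subseteq> I"
      using S by auto
    ultimately have "2 ^ (card (S - {a, b}) div 2) \<le> vec.dim ?E"
      using less.hyps[OF _ _ _ subspace_eigenspace_within[OF W(1)] E(1) inv_E inj_E] by blast
    moreover have "card (S - {a, b}) = card S - 2"
      using ab S(1) by (simp add: card_Diff_subset)
    moreover have "card S div 2 = Suc ((card S - 2) div 2)"
      using False by (simp add: div_if)
    ultimately show ?thesis
      using E(2) by simp
  qed
qed

section \<open>The rank bound\<close>

definition anticomm_rank_bound :: "nat \<Rightarrow> real" where
  "anticomm_rank_bound d = (2 * log 2 (real d) + 1) * real d"

lemma anticomm_rank_bound_superadditive:
  assumes "1 \<le> a" "1 \<le> b"
  shows "anticomm_rank_bound a + anticomm_rank_bound b \<le> anticomm_rank_bound (a + b)"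
proof -
  have "log 2 (real a) \<le> log 2 (real (a + b))" "log 2 (real b) \<le> log 2 (real (a + b))"
    using assms by (simp_all add: log_mono)
  then have "(2 * log 2 (real a) + 1) * real a \<le> (2 * log 2 (real (a + b)) + 1) * real a"
    and "(2 * log 2 (real b) + 1) * real b \<le> (2 * log 2 (real (a + b)) + 1) * real b"
    by (simp_all add: mult_right_mono)
  then show ?thesis
    unfolding anticomm_rank_bound_def by (simp add: distrib_left)
qed

lemma card_mult_le_anticomm_rank_bound:
  assumes "2 ^ (c div 2) \<le> d"
  shows "real c * real d \<le> anticomm_rank_bound d"
proof -
  have "(1::nat) \<le> 2 ^ (c div 2)"
    by simp
  then have "1 \<le> d"
    using assms by linarith
  have pow: "(2::real) ^ (c div 2) \<le> real d"
    using assms by (metis of_nat_le_iff of_nat_numeral of_nat_power)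
  have "real (c div 2) = log 2 (2 ^ (c div 2))"
    by (simp add: log_nat_power)
  also have "\<dots> \<le> log 2 (real d)"
    using pow by (intro log_mono) simp_all
  finally have "real c \<le> 2 * log 2 (real d) + 1"
    by linarith
  then show ?thesis
    unfolding anticomm_rank_bound_def using \<open>1 \<le> d\<close> by (simp add: mult_right_mono)
qed

lemma dim_image_direct_sum:
  fixes Q :: "'a::field^'n^'n"
  assumes U: "vec.subspace U" and V: "vec.subspace V" and UV: "U \<inter> V \<subseteq> {0}"
    and inv_U: "\<forall>y\<in>U. Q *v y \<in> U" and inv_V: "\<forall>y\<in>V. Q *v y \<in> V"
  shows "vec.dim ((\<lambda>y. Q *v y) ` {u + v |u v. u \<in> U \<and> v \<in> V})
           = vec.dim ((\<lambda>y. Q *v y) ` U) + vec.dim ((\<lambda>y. Q *v y) ` V)"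
proof -
  let ?QU = "(\<lambda>y. Q *v y) ` U" and ?QV = "(\<lambda>y. Q *v y) ` V"
  have image_sum: "(\<lambda>y. Q *v y) ` {u + v |u v. u \<in> U \<and> v \<in> V} = {u + v |u v. u \<in> ?QU \<and> v \<in> ?QV}"
  proof (intro equalityI subsetI)
    fix z assume "z \<in> (\<lambda>y. Q *v y) ` {u + v |u v. u \<in> U \<and> v \<in> V}"
    then obtain u v where "u \<in> U" "v \<in> V" "z = Q *v (u + v)"
      by blast
    then show "z \<in> {u + v |u v. u \<in> ?QU \<and> v \<in> ?QV}"
      unfolding matrix_vector_right_distrib by blast
  next
    fix z assume "z \<in> {u + v |u v. u \<in> ?QU \<and> v \<in> ?QV}"
    then obtain u v where "u \<in> U" "v \<in> V" "z = Q *v u + Q *v v"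
      by blast
    then show "z \<in> (\<lambda>y. Q *v y) ` {u + v |u v. u \<in> U \<and> v \<in> V}"
      unfolding matrix_vector_right_distrib[symmetric] by blast
  qed
  have "?QU \<inter> ?QV \<subseteq> {0}"
  proof
    fix z assume "z \<in> ?QU \<inter> ?QV"
    then have "z \<in> U \<inter> V"
      using inv_U inv_V by auto
    then show "z \<in> {0}"
      using UV by blast
  qed
  then show ?thesis
    unfolding image_sum by (rule dim_direct_sum[OF vec.subspace_image[OF U] vec.subspace_image[OF V]])
qed

lemma sum_dim_power_image_injective_or_nilpotent:
  fixes e :: "'i \<Rightarrow> complex^'n^'n"
  assumes anti: "\<forall>i\<in>I. \<forall>j\<in>I. i \<noteq> j \<longrightarrow> e i ** e j = - (e j ** e i)" and I: "finite I"
    and W: "vec.subspace W" and inv: "\<forall>i\<in>I. \<forall>y\<in>W. e i *v y \<in> W"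
    and dichotomy: "\<forall>i\<in>I. (\<forall>y\<in>W. e i *v y = 0 \<longrightarrow> y = 0) \<or> (\<forall>y\<in>W. matrix_pow (e i) m *v y = 0)"
  shows "real (\<Sum>i\<in>I. vec.dim ((\<lambda>y. matrix_pow (e i) m *v y) ` W)) \<le> anticomm_rank_bound (vec.dim W)"
proof (cases "W = {0}")
  case True
  then show ?thesis
    by (simp add: anticomm_rank_bound_def)
next
  case False
  define S where "S = {i\<in>I. \<forall>y\<in>W. e i *v y = 0 \<longrightarrow> y = 0}"
  have S: "S \<subseteq> I" "finite S"
    using I by (auto simp: S_def)
  have inv_S: "\<forall>i\<in>S. \<forall>y\<in>W. e i *v y \<in> W" and inj_S: "\<forall>i\<in>S. \<forall>y\<in>W. e i *v y = 0 \<longrightarrow> y = 0"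
    using inv unfolding S_def by blast+
  have full: "vec.dim ((\<lambda>y. matrix_pow (e i) m *v y) ` W) = vec.dim W" if "i \<in> S" for i
  proof (rule dim_image_inj_on[OF W])
    show "\<forall>y\<in>W. matrix_pow (e i) m *v y = 0 \<longrightarrow> y = 0"
      using matrix_pow_injective_on[of W "e i"] inv_S inj_S that by blast
  qed
  have zero: "vec.dim ((\<lambda>y. matrix_pow (e i) m *v y) ` W) = 0" if "i \<in> I - S" for i
  proof -
    have "\<forall>y\<in>W. matrix_pow (e i) m *v y = 0"
      using that dichotomy unfolding S_def by blast
    then have "(\<lambda>y. matrix_pow (e i) m *v y) ` W \<subseteq> {0}"
      by auto
    then show ?thesis
      by simp
  qed
  have "(\<Sum>i\<in>I. vec.dim ((\<lambda>y. matrix_pow (e i) m *v y) ` W))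
      = (\<Sum>i\<in>I - S. vec.dim ((\<lambda>y. matrix_pow (e i) m *v y) ` W))
        + (\<Sum>i\<in>S. vec.dim ((\<lambda>y. matrix_pow (e i) m *v y) ` W))"
    by (rule sum.subset_diff[OF S(1) I])
  also have "\<dots> = card S * vec.dim W"
    using full zero by (simp del: vec.dim_eq_0)
  finally have "(\<Sum>i\<in>I. vec.dim ((\<lambda>y. matrix_pow (e i) m *v y) ` W)) = card S * vec.dim W" .
  moreover have "2 ^ (card S div 2) \<le> vec.dim W"
    by (rule anticommuting_injective_family_dim[OF anti S(2,1) W False inv_S inj_S])
  ultimately show ?thesis
    using card_mult_le_anticomm_rank_bound by (metis of_nat_mult)
qed

lemma anticommuting_family_fitting_split:
  fixes e :: "'i \<Rightarrow> 'a::field^'n^'n"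
  assumes anti: "\<forall>i\<in>I. \<forall>j\<in>I. i \<noteq> j \<longrightarrow> e i ** e j = - (e j ** e i)"
    and W: "vec.subspace W" and inv: "\<forall>i\<in>I. \<forall>y\<in>W. e i *v y \<in> W" and j: "j \<in> I"
    and singular: "x \<in> W" "x \<noteq> 0" "e j *v x = 0"
    and not_nilpotent: "y \<in> W" "matrix_pow (e j) CARD('n) *v y \<noteq> 0"
  obtains K L where "vec.subspace K" "vec.subspace L" "K \<noteq> {0}" "L \<noteq> {0}" "K \<inter> L \<subseteq> {0}"
    "W = {u + v |u v. u \<in> K \<and> v \<in> L}"
    "\<forall>i\<in>I. \<forall>z\<in>K. e i *v z \<in> K" "\<forall>i\<in>I. \<forall>z\<in>L. e i *v z \<in> L"
proof -
  define P where "P = matrix_pow (e j) CARD('n)"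
  define K where "K = {x\<in>W. P *v x = 0}"
  define L where "L = (\<lambda>y. P *v y) ` W"
  have "\<forall>y\<in>W. e j *v y \<in> W"
    using inv j by blast
  note fitting = fitting_decomposition[OF W this dim_subset_UNIV_cart_gen,
      folded P_def, folded K_def L_def]
  have sign: "P ** e i = e i ** P \<or> P ** e i = - (e i ** P)" if "i \<in> I" for i
  proof (cases "i = j")
    case True
    then show ?thesis
      by (simp add: P_def matrix_pow_commute)
  next
    case False
    then have "e i ** e j = - (e j ** e i)"
      using anti that j by blast
    then show ?thesis
      unfolding P_def by (rule matrix_pow_anticommute)
  qed
  have invariant: "(\<forall>z\<in>K. e i *v z \<in> K) \<and> (\<forall>z\<in>L. e i *v z \<in> L)" if "i \<in> I" for i
  proof -
    have "\<forall>y\<in>W. e i *v y \<in> W"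
      using inv that by blast
    note parts = kernel_image_invariant_if_commute_up_to_sign[OF sign[OF that] W this]
    show ?thesis
      unfolding K_def L_def using parts by blast
  qed
  have "Suc (CARD('n) - 1) = CARD('n)"
    by simp
  then have "P = matrix_pow (e j) (CARD('n) - 1) ** e j"
    using matrix_pow_Suc_right[of "e j" "CARD('n) - 1"] by (simp only: P_def)
  then have "P *v x = 0"
    using singular(3) by (simp flip: matrix_vector_mul_assoc)
  then have "K \<noteq> {0}"
    using singular(1,2) by (auto simp: K_def)
  moreover have "L \<noteq> {0}"
    using not_nilpotent by (auto simp: L_def P_def)
  moreover have "vec.subspace K" "vec.subspace L"
    unfolding K_def L_def by (rule subspace_kernel_within[OF W], rule vec.subspace_image[OF W])
  ultimately show ?thesis
    using invariant by (intro that[OF _ _ _ _ fitting(2,1)]) blast+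
qed

lemma sum_dim_power_image_le_anticomm_rank_bound:
  fixes e :: "'i \<Rightarrow> complex^'n^'n"
  assumes anti: "\<forall>i\<in>I. \<forall>j\<in>I. i \<noteq> j \<longrightarrow> e i ** e j = - (e j ** e i)" and I: "finite I"
  shows "vec.subspace W \<Longrightarrow> \<forall>i\<in>I. \<forall>y\<in>W. e i *v y \<in> W \<Longrightarrow>
    real (\<Sum>i\<in>I. vec.dim ((\<lambda>y. matrix_pow (e i) CARD('n) *v y) ` W))
      \<le> anticomm_rank_bound (vec.dim W)"
proof (induction "vec.dim W" arbitrary: W rule: less_induct)
  case less
  note W = less.prems(1) and inv = less.prems(2)
  define R where "R i V = vec.dim ((\<lambda>y. matrix_pow (e i) CARD('n) *v y) ` V)" for i V
  show ?case
  proof (cases "\<exists>j\<in>I. (\<exists>x\<in>W. x \<noteq> 0 \<and> e j *v x = 0) \<and> (\<exists>y\<in>W. matrix_pow (e j) CARD('n) *v y \<noteq> 0)")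
    case False
    then have "\<forall>i\<in>I. (\<forall>y\<in>W. e i *v y = 0 \<longrightarrow> y = 0) \<or> (\<forall>y\<in>W. matrix_pow (e i) CARD('n) *v y = 0)"
      by blast
    then show ?thesis
      by (rule sum_dim_power_image_injective_or_nilpotent[OF anti I W inv])
  next
    case True
    then obtain j x y where "j \<in> I" "x \<in> W" "x \<noteq> 0" "e j *v x = 0"
      "y \<in> W" "matrix_pow (e j) CARD('n) *v y \<noteq> 0"
      by blast
    then obtain K L where "vec.subspace K" "vec.subspace L" "K \<noteq> {0}" "L \<noteq> {0}"
      and KL: "K \<inter> L \<subseteq> {0}" and W_split: "W = {u + v |u v. u \<in> K \<and> v \<in> L}"
      and "\<forall>i\<in>I. \<forall>z\<in>K. e i *v z \<in> K" "\<forall>i\<in>I. \<forall>z\<in>L. e i *v z \<in> L"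
      by (rule anticommuting_family_fitting_split[OF anti W inv])
    then have K: "vec.subspace K" "K \<noteq> {0}" "\<forall>i\<in>I. \<forall>z\<in>K. e i *v z \<in> K"
      and L: "vec.subspace L" "L \<noteq> {0}" "\<forall>i\<in>I. \<forall>z\<in>L. e i *v z \<in> L"
      by simp_all
    have dim_pos: "1 \<le> vec.dim K" "1 \<le> vec.dim L"
      using one_le_dim_if_nonzero K L by blast+
    have dim_W: "vec.dim W = vec.dim K + vec.dim L"
      using dim_direct_sum[OF K(1) L(1) KL] W_split by simp
    have IH_K: "real (\<Sum>i\<in>I. R i K) \<le> anticomm_rank_bound (vec.dim K)"
      unfolding R_def using less.hyps[OF _ K(1) K(3)] dim_W dim_pos by simp
    have IH_L: "real (\<Sum>i\<in>I. R i L) \<le> anticomm_rank_bound (vec.dim L)"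
      unfolding R_def using less.hyps[OF _ L(1) L(3)] dim_W dim_pos by simp
    have "R i W = R i K + R i L" if "i \<in> I" for i
    proof -
      have "\<forall>z\<in>K. e i *v z \<in> K" "\<forall>z\<in>L. e i *v z \<in> L"
        using K(3) L(3) that by blast+
      then have "\<forall>z\<in>K. matrix_pow (e i) CARD('n) *v z \<in> K"
        and "\<forall>z\<in>L. matrix_pow (e i) CARD('n) *v z \<in> L"
        by (simp_all add: matrix_pow_mult_in_invariant)
      then show ?thesis
        unfolding R_def W_split by (rule dim_image_direct_sum[OF K(1) L(1) KL])
    qed
    then have "real (\<Sum>i\<in>I. R i W) = real (\<Sum>i\<in>I. R i K) + real (\<Sum>i\<in>I. R i L)"
      by (simp add: sum.distrib)
    also have "\<dots> \<le> anticomm_rank_bound (vec.dim K) + anticomm_rank_bound (vec.dim L)"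
      using IH_K IH_L by linarith
    also have "\<dots> \<le> anticomm_rank_bound (vec.dim W)"
      unfolding dim_W by (rule anticomm_rank_bound_superadditive[OF dim_pos])
    finally show ?thesis
      unfolding R_def .
  qed
qed

theorem theorem3:
  fixes e :: "nat \<Rightarrow> complex^'n^'n" and k :: nat
  assumes anticomm: "\<forall>i\<in>{1..k}. \<forall>j\<in>{1..k}. i \<noteq> j \<longrightarrow> e i ** e j = - (e j ** e i)"
  shows "real (\<Sum>i=1..k. rank (matrix_pow (e i) CARD('n)))
           \<le> (2 * log 2 (real CARD('n)) + 1) * real CARD('n)"
proof -
  have "\<forall>i\<in>{1..k}. \<forall>j\<in>{1..k}. i \<noteq> j \<longrightarrow>
          transpose (e i) ** transpose (e j) = - (transpose (e j) ** transpose (e i))"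
  proof (intro ballI impI)
    fix i j assume "i \<in> {1..k}" "j \<in> {1..k}" "i \<noteq> j"
    then have "e j ** e i = - (e i ** e j)"
      by (intro anticomm[rule_format]) auto
    then show "transpose (e i) ** transpose (e j) = - (transpose (e j) ** transpose (e i))"
      by (simp only: matrix_transpose_mul[symmetric] transpose_minus)
  qed
  then have "real (\<Sum>i=1..k. vec.dim (range (\<lambda>y. matrix_pow (transpose (e i)) CARD('n) *v y)))
      \<le> anticomm_rank_bound (vec.dim (UNIV :: (complex^'n) set))"
    by (rule sum_dim_power_image_le_anticomm_rank_bound) simp_all
  moreover have "rank (matrix_pow (e i) CARD('n))
      = vec.dim (range (\<lambda>y. matrix_pow (transpose (e i)) CARD('n) *v y))" for i
    by (simp only: rank_eq_dim_range_transpose transpose_matrix_pow)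
  ultimately show ?thesis
    by (simp only: vec_dim_card anticomm_rank_bound_def)
qed

end
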